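(* Let $d\ge2$, $G$ a $d$-regular graph on $n$ vertices, $F$ regular, $T=F^{-1}(1-1/d)$ (so $F(T)=1-1/d$) and $p=T\cdot(1-1/d)^d$. Then for every price $p'>0$ and every $T'$ with $T'\cdot F(T')^d=p'$ (i.e. $T'\cdot\mathbf{1}\in\mathcal{N}_{p'\cdot\mathbf{1}}$ is a symmetric equilibrium), $$\mathcal{R}(p\cdot\mathbf{1},T\cdot\mathbf{1})\ \ge\ c\cdot\mathcal{R}(p'\cdot\mathbf{1},T'\cdot\mathbf{1})$$ for an absolute constant $c>0$ (one may take $c=1/16$). Here $\mathcal{R}(p'\cdot\mathbf{1},T'\cdot\mathbf{1})=n\,T'(1-F(T'))F(T')^d$.
   Context: Public-goods pricing game: $n$ buyers are the vertices of an undirected graph $G=([n],E)$; $N(i)=\{j:(i,j)\in E\}$ (so $i\notin N(i)$); $G$ is $d$-regular if $|N(i)|=d$ for all $i$. Values i.i.d. with cumulative distribution function $F$, $F(\infty)=1$. An equilibrium for price vector $\mathbf{p}$ is $\mathbf{T}\in[0,\infty]^n$ (buyer $i$ purchases iff $v_i\ge T_i$) with $T_i=p_i/\prod_{j\in N(i)}F(T_j)$ for all $i$; $\mathcal{N}_{\mathbf{p}}$ is the set of equilibria; $\mathcal{R}(\mathbf{p},\mathbf{T})=\sum_ip_i(1-F(T_i))$; $p\cdot\mathbf{1}$ is the uniform price vector. $F$ is regular: atomless, supported on an interval in $[0,\infty)$ with positive density $f$ there, and $\phi(x)=x-\frac{1-F(x)}{f(x)}$ non-decreasing. $F^{-1}(q)=\min\{x:F(x)=q\}$.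 *)

theory Defs
  imports "HOL-Analysis.Analysis"
begin

definition simple_graph :: "nat \<Rightarrow> (nat \<Rightarrow> nat \<Rightarrow> bool) \<Rightarrow> bool" where
  "simple_graph n E \<longleftrightarrow> (\<forall>i j. E i j \<longrightarrow> i < n \<and> j < n \<and> i \<noteq> j \<and> E j i)"

definition nbhd :: "nat \<Rightarrow> (nat \<Rightarrow> nat \<Rightarrow> bool) \<Rightarrow> nat \<Rightarrow> nat set" where
  "nbhd n E i = {j. j < n \<and> E i j}"

definition regular_graph :: "nat \<Rightarrow> (nat \<Rightarrow> nat \<Rightarrow> bool) \<Rightarrow> nat \<Rightarrow> bool" where
  "regular_graph n E d \<longleftrightarrow> simple_graph n E \<and> (\<forall>i<n. card (nbhd n E i) = d)"

definition cdf :: "(real \<Rightarrow> real) \<Rightarrow> bool" where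
  "cdf F \<longleftrightarrow> mono F \<and> (F \<longlongrightarrow> 0) at_bot \<and> (F \<longlongrightarrow> 1) at_top
     \<and> (\<forall>x. continuous (at_right x) F)"

definition virt_val :: "(real \<Rightarrow> real) \<Rightarrow> (real \<Rightarrow> real) \<Rightarrow> real \<Rightarrow> real" where
  "virt_val F f x = x - (1 - F x) / f x"

definition regular_dist :: "(real \<Rightarrow> real) \<Rightarrow> (real \<Rightarrow> real) \<Rightarrow> bool" where
  "regular_dist F f \<longleftrightarrow> cdf F \<and> continuous_on UNIV F \<and>
     (\<exists>S. is_interval S \<and> S \<subseteq> {0..} \<and> interior S \<noteq> {} \<and>
        (\<forall>x. (\<forall>s\<in>S. x \<le> s) \<longrightarrow> F x = 0) \<and>
        (\<forall>x. (\<forall>s\<in>S. s \<le> x) \<longrightarrow> F x = 1) \<and>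
        (\<forall>x\<in>interior S. (F has_real_derivative f x) (at x) \<and> f x > 0) \<and>
        mono_on (interior S) (virt_val F f))"

definition quantile :: "(real \<Rightarrow> real) \<Rightarrow> real \<Rightarrow> real" where
  "quantile F q = (LEAST x. F x = q)"

definition revenue :: "nat \<Rightarrow> (real \<Rightarrow> real) \<Rightarrow> (nat \<Rightarrow> real) \<Rightarrow> (nat \<Rightarrow> real) \<Rightarrow> real" where
  "revenue n F p T = (\<Sum>i<n. p i * (1 - F (T i)))"

end

theory Submission
  imports Defs
begin

text \<open>Pricing every buyer at the quantile T with F T = 1 - 1/d earns T (1 - 1/d)^d / d per buyer.
  A symmetric equilibrium T' earns T' s^d (1 - s) per buyer, where s = F T'.  If T' \<le> T this is
  at most T / d, because s^d (1 - s) \<le> 1/d.  If T' > T, regularity makes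
  x (1 - F x) / F x non-increasing on the support, so T' s^d (1 - s) \<le> T (1 - F T) / F T.
  In both cases the loss is a factor (1 - 1/d)^(d+1) \<ge> 1/(3\<cdot>4), since (1 - 1/d)^(d-1) \<ge> 1/e.\<close>

lemma one_minus_inverse_power_Suc_ge:
  fixes d :: nat
  assumes "d \<ge> 2"
  shows "(1 - 1 / real d) ^ (d + 1) \<ge> 1 / 12"
proof -
  define m where "m = d - 1"
  have m: "m > 0" "d = m + 1" using assms by (auto simp: m_def)
  have "(1 + 1 / real m) ^ m \<le> exp 1"
    using exp_ge_one_plus_x_over_n_power_n[of m 1] m by simp
  also have "\<dots> \<le> 3" by (rule exp_le)
  moreover have "0 < (1 + 1 / real m) ^ m"
    by (intro zero_less_power) (simp add: add_pos_nonneg)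
  ultimately have "1 / 3 \<le> 1 / (1 + 1 / real m) ^ m"
    by (intro divide_left_mono) auto
  also have "1 / (1 + 1 / real m) ^ m = (1 - 1 / real d) ^ m"
    using m by (simp add: power_one_over[symmetric] field_simps)
  finally have pow_m: "(1 - 1 / real d) ^ m \<ge> 1 / 3" .
  have "(1 - 1 / real d) ^ 2 \<ge> (1 / 2) ^ 2"
    using assms by (intro power_mono) (auto simp: field_simps)
  with pow_m have "(1 - 1 / real d) ^ m * (1 - 1 / real d) ^ 2 \<ge> 1 / 3 * (1 / 2) ^ 2"
    by (intro mult_mono) auto
  moreover have "1 / 3 * (1 / 2) ^ 2 = (1 / 12 :: real)" by (simp add: power2_eq_square)
  moreover have "d + 1 = m + 2" using m by simp
  ultimately show ?thesis by (simp only: power_add)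
qed

lemma power_mult_one_minus_le:
  fixes s :: real and d :: nat
  assumes "d \<ge> 1" "0 \<le> s" "s \<le> 1"
  shows "s ^ d * (1 - s) \<le> 1 / real d"
proof -
  define q where "q = 1 - s"
  have q: "0 \<le> q" "q \<le> 1" using assms by (auto simp: q_def)
  have "s ^ d * (1 + real d * q) \<le> s ^ d * (1 + q) ^ d"
    using Bernoulli_inequality[of q d] q assms by (intro mult_left_mono) auto
  also have "\<dots> = (1 - q\<^sup>2) ^ d"
    by (simp add: q_def power_mult_distrib[symmetric] power2_eq_square algebra_simps)
  also have "\<dots> \<le> 1" using q by (intro power_le_one) (auto simp: power_le_one)
  finally have "s ^ d * (1 + real d * q) \<le> 1" .
  moreover have "s ^ d * q * real d \<le> s ^ d * (1 + real d * q)"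
    using assms by (simp add: algebra_simps)
  ultimately have "s ^ d * q * real d \<le> 1" by linarith
  then show ?thesis using assms by (simp add: q_def field_simps)
qed

lemma cdf_bounds:
  assumes "cdf F"
  shows "0 \<le> F x" "F x \<le> 1"
proof -
  have mono: "mono F" and lim0: "(F \<longlongrightarrow> 0) at_bot" and lim1: "(F \<longlongrightarrow> 1) at_top"
    using assms by (auto simp: cdf_def)
  show "0 \<le> F x"
    by (rule tendsto_upperbound[OF lim0])
      (auto simp: eventually_at_bot_linorder intro!: exI[of _ x] monoD[OF mono])
  show "F x \<le> 1"
    by (rule tendsto_lowerbound[OF lim1])
      (auto simp: eventually_at_top_linorder intro!: exI[of _ x] monoD[OF mono])
qed

lemma cdf_quantile:
  assumes "cdf F" "continuous_on UNIV F" "0 < q" "q < 1"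
  shows "F (quantile F q) = q"
proof -
  have mono: "mono F" and lim0: "(F \<longlongrightarrow> 0) at_bot" and lim1: "(F \<longlongrightarrow> 1) at_top"
    using assms(1) by (auto simp: cdf_def)
  obtain a where a: "\<And>y. y \<le> a \<Longrightarrow> F y < q"
    using order_tendstoD(2)[OF lim0 \<open>0 < q\<close>] by (auto simp: eventually_at_bot_linorder)
  obtain b where b: "\<And>y. y \<ge> b \<Longrightarrow> F y > q"
    using order_tendstoD(1)[OF lim1 \<open>q < 1\<close>] by (auto simp: eventually_at_top_linorder)
  have "a \<le> b"
  proof (rule ccontr)
    assume "\<not> a \<le> b"
    then have "F b \<le> F a" using monoD[OF mono] by simp
    then show False using a[of a] b[of b] by simp
  qed
  define A where "A = {x. F x = q}"
  have "\<exists>x\<ge>a. x \<le> b \<and> F x = q"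
    using a[of a] b[of b] \<open>a \<le> b\<close> continuous_on_subset[OF assms(2) subset_UNIV]
    by (intro IVT') (auto simp: less_imp_le)
  then have "A \<noteq> {}" by (auto simp: A_def)
  moreover have "a \<le> x" if "x \<in> A" for x
  proof (rule ccontr)
    assume "\<not> a \<le> x"
    then have "F x < q" using a by simp
    then show False using that by (simp add: A_def)
  qed
  then have bdd: "bdd_below A" by (auto simp: bdd_below_def)
  moreover have "closed A"
    unfolding A_def by (rule closed_Collect_eq[OF assms(2)]) simp
  ultimately have "Inf A \<in> A" by (rule closed_contains_Inf)
  moreover have "quantile F q = Inf A"
    unfolding quantile_def
  proof (rule Least_equality)
    show "F (Inf A) = q" using \<open>Inf A \<in> A\<close> by (simp add: A_def)
    show "Inf A \<le> y" if "F y = q" for y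
      using cInf_lower[OF _ bdd] that by (simp add: A_def)
  qed
  ultimately show ?thesis by (simp add: A_def)
qed

lemma interval_between_in_interior:
  fixes S :: "real set"
  assumes "is_interval S" "a \<in> S" "b \<in> S" "a < y" "y < b"
  shows "y \<in> interior S"
proof -
  have "{a<..<b} \<subseteq> S"
  proof
    fix z assume "z \<in> {a<..<b}"
    then show "z \<in> S"
      using assms(1-3) unfolding is_interval_1 by (meson greaterThanLessThan_iff less_imp_le)
  qed
  then have "{a<..<b} \<subseteq> interior S" by (intro interior_maximal) auto
  then show ?thesis using assms(4,5) by auto
qed

locale regular_support =
  fixes F f :: "real \<Rightarrow> real" and S :: "real set"
  assumes continuous: "continuous_on UNIV F"
    and mono: "mono F"
    and nonneg: "\<And>x. 0 \<le> F x"
    and le_one: "\<And>x. F x \<le> 1"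
    and interval: "is_interval S"
    and support_nonneg: "S \<subseteq> {0..}"
    and below_support: "\<And>x. (\<forall>s\<in>S. x \<le> s) \<Longrightarrow> F x = 0"
    and above_support: "\<And>x. (\<forall>s\<in>S. s \<le> x) \<Longrightarrow> F x = 1"
    and derivative: "\<And>x. x \<in> interior S \<Longrightarrow> (F has_real_derivative f x) (at x)"
    and density_pos: "\<And>x. x \<in> interior S \<Longrightarrow> f x > 0"
    and virt_val_mono: "mono_on (interior S) (virt_val F f)"

lemma regular_dist_support:
  assumes "regular_dist F f"
  obtains S where "regular_support F f S"
proof -
  have cdf: "cdf F" and "continuous_on UNIV F" using assms by (auto simp: regular_dist_def)
  moreover obtain S where "is_interval S" "S \<subseteq> {0..}"
    "\<forall>x. (\<forall>s\<in>S. x \<le> s) \<longrightarrow> F x = 0" "\<forall>x. (\<forall>s\<in>S. s \<le> x) \<longrightarrow> F x = 1"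
    "\<forall>x\<in>interior S. (F has_real_derivative f x) (at x) \<and> f x > 0"
    "mono_on (interior S) (virt_val F f)"
    using assms by (auto simp: regular_dist_def)
  ultimately have "regular_support F f S"
    using cdf_bounds[OF cdf] by unfold_locales (simp_all add: cdf_def)
  then show ?thesis by (rule that)
qed

context regular_support
begin

lemma support_point_below:
  assumes "F x > 0"
  obtains s where "s \<in> S" "s < x"
proof -
  have "\<not> (\<forall>s\<in>S. x \<le> s)" using below_support assms by force
  then show ?thesis using that by (auto simp: not_le)
qed

lemma support_point_above:
  assumes "F x < 1"
  obtains s where "s \<in> S" "x < s"
proof -
  have "\<not> (\<forall>s\<in>S. s \<le> x)" using above_support assms by force
  then show ?thesis using that by (auto simp: not_le)
qed

text \<open>With \<phi> = virt_val F f, the function G y = y (1 - F y) + \<phi> x F y has derivative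
  f y (\<phi> x - \<phi> y) \<ge> 0 on the support left of x, so G x \<ge> G (Inf S) = Inf S \<ge> 0.\<close>
lemma hazard_bound:
  assumes "x \<in> interior S"
  shows "F x * (1 - F x) \<le> x * f x"
proof -
  have x_in: "x \<in> S" using assms interior_subset by blast
  have bdd: "bdd_below S" using support_nonneg by (auto simp: bdd_below_def)
  define a where "a = Inf S"
  have a_le: "\<forall>s\<in>S. a \<le> s" using bdd by (auto simp: a_def cInf_lower)
  have "a \<ge> 0" unfolding a_def using x_in support_nonneg by (intro cInf_greatest) auto
  have "F a = 0" using below_support a_le by blast
  define G where "G y = y * (1 - F y) + virt_val F f x * F y" for y
  have "G a \<le> G x"
  proof (rule DERIV_nonneg_imp_increasing_open[of a x G])
    show "a \<le> x" using a_le x_in by blast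
    show "continuous_on {a..x} G"
      unfolding G_def using continuous_on_subset[OF continuous] by (intro continuous_intros) auto
    fix y assume y: "a < y" "y < x"
    obtain s where "s \<in> S" "s < y"
      using cInf_less_iff[of S y] x_in bdd y(1) unfolding a_def by blast
    then have y_int: "y \<in> interior S" using interval_between_in_interior interval x_in y(2) by blast
    have "(G has_real_derivative f y * (virt_val F f x - virt_val F f y)) (at y)"
      unfolding G_def virt_val_def using density_pos[OF y_int] density_pos[OF assms]
      by (auto intro!: derivative_eq_intros derivative[OF y_int] simp: field_simps)
    moreover have "virt_val F f y \<le> virt_val F f x"
      using virt_val_mono y_int assms y by (auto simp: mono_on_def)
    ultimately show "\<exists>z. (G has_real_derivative z) (at y) \<and> z \<ge> 0"
      using density_pos[OF y_int] by auto
  qed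
  moreover have "G x = x - F x * (1 - F x) / f x"
    using density_pos[OF assms] by (simp add: G_def virt_val_def field_simps)
  moreover have "G a = a" using \<open>F a = 0\<close> by (simp add: G_def)
  ultimately have "F x * (1 - F x) / f x \<le> x" using \<open>a \<ge> 0\<close> by linarith
  then show ?thesis using density_pos[OF assms] by (simp add: field_simps)
qed

lemma revenue_odds_antimono:
  assumes "s \<in> S" "s < t" "t \<le> x" "x < s'" "s' \<in> S" "F t > 0"
  shows "x * (1 - F x) / F x \<le> t * (1 - F t) / F t"
proof (rule DERIV_nonpos_imp_decreasing_open[OF \<open>t \<le> x\<close>])
  have F_pos: "F y > 0" if "t \<le> y" for y
    using monoD[OF mono that] \<open>F t > 0\<close> by linarith
  show "continuous_on {t..x} (\<lambda>y. y * (1 - F y) / F y)"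
    using continuous_on_subset[OF continuous] F_pos
    by (intro continuous_intros) (auto simp: less_le)
  fix y assume y: "t < y" "y < x"
  have y_int: "y \<in> interior S"
    using interval_between_in_interior[OF interval \<open>s \<in> S\<close> \<open>s' \<in> S\<close>] assms y by auto
  have "((\<lambda>y. y * (1 - F y) / F y) has_real_derivative
      (F y * (1 - F y) - y * f y) / (F y)\<^sup>2) (at y)"
    using F_pos[of y] y
    by (auto intro!: derivative_eq_intros derivative[OF y_int] simp: field_simps power2_eq_square)
  moreover have "(F y * (1 - F y) - y * f y) / (F y)\<^sup>2 \<le> 0"
    using hazard_bound[OF y_int] F_pos[of y] y by (simp add: divide_nonpos_pos)
  ultimately show "\<exists>z. ((\<lambda>y. y * (1 - F y) / F y) has_real_derivative z) (at y) \<and> z \<le> 0"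
    by blast
qed

lemma revenue_above_threshold_le:
  assumes "F T > 0" "T < T'" "F T' < 1" "T' > 0"
  shows "T' * F T' ^ d * (1 - F T') \<le> T * (1 - F T) / F T"
proof -
  define s where "s = F T'"
  have "F T \<le> s" using monoD[OF mono] assms(2) by (simp add: s_def)
  obtain s\<^sub>0 where "s\<^sub>0 \<in> S" "s\<^sub>0 < T" using support_point_below[OF assms(1)] .
  moreover obtain s\<^sub>1 where "s\<^sub>1 \<in> S" "T' < s\<^sub>1" using support_point_above[OF assms(3)] .
  ultimately have odds: "T' * (1 - s) / s \<le> T * (1 - F T) / F T"
    using revenue_odds_antimono[of s\<^sub>0 T T' s\<^sub>1] assms by (simp add: s_def)
  have "T' * s ^ d * (1 - s) = T' * (1 - s) / s * s ^ (d + 1)"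
    using \<open>F T \<le> s\<close> assms(1) by (simp add: field_simps)
  also have "\<dots> \<le> T' * (1 - s) / s"
    using \<open>F T \<le> s\<close> assms by (intro mult_left_le power_le_one) (auto simp: s_def)
  finally show ?thesis using odds by (simp add: s_def)
qed

lemma symmetric_revenue_le:
  assumes "d \<ge> 2" "F T = 1 - 1 / real d" "T' > 0"
  shows "T' * F T' ^ d * (1 - F T') \<le> 12 * (T * (1 - 1 / real d) ^ d * (1 - F T))"
proof -
  define r where "r = 1 - 1 / real d"
  define s where "s = F T'"
  have r: "1 / 2 \<le> r" "r < 1" using assms(1) by (auto simp: r_def field_simps)
  have r_Suc: "r ^ (d + 1) \<ge> 1 / 12"
    using one_minus_inverse_power_Suc_ge[OF assms(1)] by (simp add: r_def)
  have "F T > 0" using assms(2) r by (simp add: r_def)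
  then obtain s\<^sub>0 where "s\<^sub>0 \<in> S" "s\<^sub>0 < T" by (rule support_point_below)
  then have "T \<ge> 0" using support_nonneg by force
  consider "T' \<le> T" | "T < T'" "s < 1" | "s = 1"
    using le_one[of T'] by (force simp: s_def)
  then have "T' * s ^ d * (1 - s) \<le> 12 * (T * r ^ d * (1 - r))"
  proof cases
    case 1
    have "r ^ (d + 1) \<le> r ^ d" using r by (intro power_decreasing) auto
    then have "r ^ d \<ge> 1 / 12" using r_Suc by linarith
    have "T' * s ^ d * (1 - s) \<le> T' * (1 / real d)"
      using mult_left_mono[OF power_mult_one_minus_le[of d s], of T'] assms(1,3)
        nonneg[of T'] le_one[of T']
      by (simp add: s_def mult.assoc)
    also have "\<dots> \<le> T * (12 * r ^ d) * (1 / real d)"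
      using 1 mult_left_mono[of 1 "12 * r ^ d" T] \<open>r ^ d \<ge> 1 / 12\<close> \<open>T \<ge> 0\<close>
      by (intro mult_right_mono) auto
    finally show ?thesis by (simp add: r_def mult_ac)
  next
    case 2
    have "T' * s ^ d * (1 - s) \<le> T * (1 - r) / r"
      using revenue_above_threshold_le[of T T' d] \<open>F T > 0\<close> 2 assms(2,3)
      by (simp add: s_def r_def)
    also have "\<dots> \<le> T * (1 - r) / r * (12 * r ^ (d + 1))"
      using mult_left_mono[of 1 "12 * r ^ (d + 1)" "T * (1 - r) / r"] r_Suc r \<open>T \<ge> 0\<close>
      by simp
    also have "\<dots> = 12 * (T * r ^ d * (1 - r))"
      using r by (simp add: field_simps)
    finally show ?thesis .
  next
    case 3
    then show ?thesis using r \<open>T \<ge> 0\<close> by simp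
  qed
  then show ?thesis using assms(2) by (simp add: s_def r_def)
qed

end

theorem lemma4p2:
  fixes n d :: nat and E :: "nat \<Rightarrow> nat \<Rightarrow> bool"
    and F f :: "real \<Rightarrow> real" and T p p' T' :: real
  assumes "d \<ge> 2"
    and "regular_graph n E d"
    and "regular_dist F f"
    and "T = quantile F (1 - 1 / real d)"
    and "p = T * (1 - 1 / real d) ^ d"
    and "p' > 0"
    and "T' * F T' ^ d = p'"
  shows "revenue n F (\<lambda>_. p) (\<lambda>_. T) \<ge> (1/16) * revenue n F (\<lambda>_. p') (\<lambda>_. T')"
proof -
  obtain S where "regular_support F f S" using regular_dist_support[OF assms(3)] .
  then interpret regular_support F f S .
  have "F T = 1 - 1 / real d"
    using cdf_quantile[of F "1 - 1 / real d"] assms(1,3,4) by (auto simp: regular_dist_def)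
  moreover have "T' > 0"
  proof (rule ccontr)
    assume "\<not> T' > 0"
    then have "T' * F T' ^ d \<le> 0" using nonneg[of T'] by (simp add: mult_nonpos_nonneg)
    then show False using assms(6,7) by linarith
  qed
  ultimately have "p' * (1 - F T') \<le> 12 * (p * (1 - F T))"
    using symmetric_revenue_le assms(1,5,7) by auto
  then have "p' * (1 - F T') \<le> 16 * (p * (1 - F T))"
    using le_one[of T'] assms(6) mult_nonneg_nonneg[of p' "1 - F T'"] by linarith
  then have "real n * (p' * (1 - F T')) / 16 \<le> real n * (16 * (p * (1 - F T))) / 16"
    by (intro divide_right_mono mult_left_mono) auto
  then show ?thesis by (simp add: revenue_def)
qed

end
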